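(* Let $w$ be a perfectly clustering Lyndon word over a totally ordered alphabet, with a palindromic special factorization $w=a_1\pi_1a_2\pi_2\cdots\pi_{k-1}a_k$. Then for every $i\in\{1,\dots,k\}$, the word $$a_i\pi_ia_{i+1}\cdots\pi_{k-1}a_k\,a_1\pi_1a_2\cdots a_{i-1}\pi_{i-1}$$ is the lexicographically smallest conjugate of $w$ beginning with the letter $a_i$.
   Context: A special factorization of $w$ is a factorization $w=a_1\pi_1a_2\cdots\pi_{k-1}a_k$ where the set of letters occurring in $w$ is $\{a_1<\cdots<a_k\}$ and $\pi_1,\dots,\pi_{k-1}$ are words; it is palindromic if every $\pi_i$ is a palindrome. Conjugates of $w$ are the words $yx$ where $w=xy$. Lexicographic order: a proper prefix is smaller. A Lyndon word is a primitive word strictly smaller than its other conjugates. For a primitive word $v$ of length $n$ with conjugates $v_1<\cdots<v_n$, $\mathrm{bw}(v)$ is the word formed by the last letters of $v_1,\dots,v_n$; $v$ is perfectly clustering if $\mathrm{bw}(v)$ is weakly decreasing. *)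

theory Defs
  imports Main "HOL-Library.List_Lexorder"
begin

(* Lexicographic order on words: the order < / \<le> on lists from List_Lexorder
   (lexordp), in which a proper prefix is smaller. *)

definition conjugates :: "'a list \<Rightarrow> 'a list set" where
  "conjugates w = {drop n w @ take n w | n. n \<le> length w}"

definition primitive :: "'a list \<Rightarrow> bool" where
  "primitive w \<longleftrightarrow> w \<noteq> [] \<and>
     \<not> (\<exists>u m. m \<ge> 2 \<and> w = concat (replicate m u))"

definition lyndon :: "'a::linorder list \<Rightarrow> bool" where
  "lyndon w \<longleftrightarrow> primitive w \<and> (\<forall>v \<in> conjugates w. v \<noteq> w \<longrightarrow> w < v)"

definition bw :: "'a::linorder list \<Rightarrow> 'a list" where
  "bw v = map last (sorted_list_of_set (conjugates v))"

definition perfectly_clustering :: "'a::linorder list \<Rightarrow> bool" where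
  "perfectly_clustering v \<longleftrightarrow> primitive v \<and> sorted_wrt (\<ge>) (bw v)"

(* block i of a factorization a_1 pi_1 ... pi_{k-1} a_k (0-indexed):
   a_i pi_i for i < k-1, and a_k alone for i = k-1 *)
definition fblock :: "'a list \<Rightarrow> 'a list list \<Rightarrow> nat \<Rightarrow> 'a list" where
  "fblock as ps i = as ! i # (if i + 1 < length as then ps ! i else [])"

definition special_factorization :: "'a::linorder list \<Rightarrow> 'a list \<Rightarrow> 'a list list \<Rightarrow> bool" where
  "special_factorization w as ps \<longleftrightarrow>
     sorted_wrt (<) as \<and> set as = set w \<and> length ps = length as - 1 \<and>
     w = concat (map (fblock as ps) [0..<length as])"

definition palindromic_special_factorization ::
    "'a::linorder list \<Rightarrow> 'a list \<Rightarrow> 'a list list \<Rightarrow> bool" where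
  "palindromic_special_factorization w as ps \<longleftrightarrow>
     special_factorization w as ps \<and> (\<forall>p \<in> set ps. rev p = p)"

end

theory Submission
  imports Defs
begin

(* Let n = |w| and let r(p) be the number of rotations of w smaller than rotate p w.  As w is
   Lyndon, r(0) = 0, and the r(p) sum to at most n(n-1)/2.  Perfect clustering says that of two
   conjugates the one with the larger last letter is smaller; hence moving the first letter c
   of a rotation to its end changes its rank by exactly #{letters > c} - #{letters < c}.  Along
   a palindrome pi_j these increments read the same backwards, so the positions of pi_j a_(j+1)
   contribute (|pi_j| + 1)/2 times the sum of the ranks at their two ends.  These two end ranks
   add up to at least #{letters > a_j} + #{letters < a_(j+1)} = n, and summed over all blocks
   this lower bound already reaches n(n-1)/2.  So every bound is tight: the rotation at a_i has
   exactly #{letters < a_i} smaller rotations, none of which starts with a_i. *)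

lemma sum_lessThan_Suc_mod:
  "(\<Sum>q<n. g (Suc q mod n)) = (\<Sum>q<n. g q)"
proof (cases n)
  case (Suc m)
  then have "(\<Sum>q<n. g (Suc q mod n)) = g 0 + (\<Sum>q<m. g (Suc q))"
    by (simp add: add.commute)
  also have "\<dots> = (\<Sum>q<n. g q)"
    using Suc by (simp only: sum.lessThan_Suc_shift)
  finally show ?thesis .
qed simp

lemma sum_atLeastLessThan_mono_partition:
  fixes b :: "nat \<Rightarrow> nat"
  assumes "mono b"
  shows "(\<Sum>p\<in>{b 0..<b m}. g p) = (\<Sum>j<m. \<Sum>p\<in>{b j..<b (Suc j)}. g p)"
proof (induction m)
  case (Suc m)
  have "b 0 \<le> b m" "b m \<le> b (Suc m)"
    using assms by (simp_all add: monoD)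
  then have "(\<Sum>p\<in>{b 0..<b (Suc m)}. g p) =
      (\<Sum>p\<in>{b 0..<b m}. g p) + (\<Sum>p\<in>{b m..<b (Suc m)}. g p)"
    by (simp only: sum.atLeastLessThan_concat)
  then show ?case
    using Suc by simp
qed simp

lemma sum_palindromic_increments:
  fixes r :: "nat \<Rightarrow> 'b::comm_ring_1"
  assumes pal: "rev \<pi> = \<pi>"
    and step: "\<And>t. t < length \<pi> \<Longrightarrow> r (Suc t) = r t + \<delta> (\<pi> ! t)"
  shows "2 * (\<Sum>t\<le>length \<pi>. r t) = of_nat (Suc (length \<pi>)) * (r 0 + r (length \<pi>))"
proof -
  define l where "l = length \<pi>"
  define D where "D t = sum_list (map \<delta> (take t \<pi>))" for t
  have r_eq: "r t = r 0 + D t" if "t \<le> l" for t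
    using that
  proof (induction t)
    case (Suc t)
    then show ?case
      using step[of t] by (simp add: D_def l_def take_Suc_conv_app_nth)
  qed (simp add: D_def)
  have D_sym: "D t + D (l - t) = D l" if "t \<le> l" for t
  proof -
    have "take (l - t) \<pi> = rev (drop t \<pi>)"
      by (subst (1) pal[symmetric]) (simp add: l_def rev_drop)
    then have "D (l - t) = sum_list (map \<delta> (drop t \<pi>))"
      by (simp add: D_def rev_map[symmetric] sum_list_rev)
    then show ?thesis
      by (simp add: D_def l_def flip: sum_list_append map_append)
  qed
  have "(\<Sum>t<Suc l. r (l - t)) = (\<Sum>t<Suc l. r t)"
    using sum.nat_diff_reindex[of r "Suc l"] by simp
  then have "2 * (\<Sum>t<Suc l. r t) = (\<Sum>t<Suc l. r t + r (l - t))"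
    by (simp only: sum.distrib mult_2)
  also have "\<dots> = (\<Sum>t<Suc l. r 0 + r l)"
  proof (intro sum.cong)
    fix t assume "t \<in> {..<Suc l}"
    then show "r t + r (l - t) = r 0 + r l"
      using r_eq[of t] r_eq[of "l - t"] r_eq[of l] D_sym[of t] by (simp add: algebra_simps)
  qed simp
  finally show ?thesis
    by (simp add: l_def lessThan_Suc_atMost)
qed

lemma count_less_pairs_le:
  fixes f :: "nat \<Rightarrow> 'a::order"
  shows "2 * (\<Sum>p<n. \<Sum>q<n. of_bool (f q < f p) :: int) \<le> int n * (int n - 1)"
proof -
  have "2 * (\<Sum>p<n. \<Sum>q<n. of_bool (f q < f p) :: int) =
      (\<Sum>p<n. \<Sum>q<n. of_bool (f q < f p)) + (\<Sum>p<n. \<Sum>q<n. of_bool (f p < f q))"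
    by (subst (2) sum.swap) (simp only: mult_2)
  also have "\<dots> = (\<Sum>p<n. \<Sum>q<n. of_bool (f q < f p) + of_bool (f p < f q))"
    by (simp only: sum.distrib)
  also have "\<dots> \<le> (\<Sum>p<n. \<Sum>q<n. 1 - of_bool (q = p))"
    by (intro sum_mono) (auto dest: less_asym)
  also have "\<dots> = (\<Sum>p<n. int n - 1)"
    by (intro sum.cong) (simp_all add: sum_subtractf)
  also have "\<dots> = int n * (int n - 1)"
    by simp
  finally show ?thesis .
qed

lemma append_less_append_same_length_iff:
  fixes xs ys zs :: "'a::linorder list"
  assumes "length xs = length ys"
  shows "xs @ zs < ys @ zs \<longleftrightarrow> xs < ys"
  using assms
proof (induction xs arbitrary: ys)
  case (Cons x xs)
  then show ?case
    by (cases ys) auto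
qed simp

lemma conjugates_eq_range_rotate: "conjugates w = range (\<lambda>q. rotate q w)"
proof (intro equalityI subsetI)
  fix v assume "v \<in> conjugates w"
  then obtain m where "m \<le> length w" "v = drop m w @ take m w"
    by (auto simp: conjugates_def)
  then have "v = rotate (if m = length w then 0 else m) w"
    by (auto simp: rotate_drop_take)
  then show "v \<in> range (\<lambda>q. rotate q w)"
    by blast
next
  fix v assume "v \<in> range (\<lambda>q. rotate q w)"
  then obtain q where "v = rotate q w"
    by blast
  then show "v \<in> conjugates w"
    unfolding conjugates_def rotate_drop_take
    by (cases "w = []") (auto intro: less_imp_le_nat)
qed

lemma rotate_in_conjugates: "rotate q w \<in> conjugates w"
  by (simp add: conjugates_eq_range_rotate)

lemma length_conjugate: "v \<in> conjugates w \<Longrightarrow> length v = length w"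
  by (auto simp: conjugates_eq_range_rotate)

lemma rotate1_in_conjugates: "v \<in> conjugates w \<Longrightarrow> rotate1 v \<in> conjugates w"
  by (auto simp: conjugates_eq_range_rotate simp flip: rotate_Suc)

lemma finite_conjugates: "finite (conjugates w)"
proof -
  have "conjugates w = (\<lambda>m. drop m w @ take m w) ` {..length w}"
    by (auto simp: conjugates_def)
  then show ?thesis
    by simp
qed

lemma hd_rotate: "q < length w \<Longrightarrow> hd (rotate q w) = w ! q"
  by (cases "w = []") (simp_all add: hd_rotate_conv_nth)

lemma perfectly_clustering_less_if_last_less:
  assumes pc: "perfectly_clustering w"
    and x: "x \<in> conjugates w" and y: "y \<in> conjugates w"
    and last_less: "last y < last x"
  shows "x < y"
proof -
  define L where "L = sorted_list_of_set (conjugates w)"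
  have sorted_L: "sorted_wrt (<) L"
    by (simp add: L_def)
  have lasts_antitone: "sorted_wrt (\<ge>) (map last L)"
    using pc by (simp add: perfectly_clustering_def bw_def L_def)
  have set_L: "set L = conjugates w"
    by (simp add: L_def finite_conjugates)
  obtain i j where i: "i < length L" "L ! i = x" and j: "j < length L" "L ! j = y"
    using x y set_L by (metis in_set_conv_nth)
  have "\<not> j \<le> i"
  proof
    assume "j \<le> i"
    then have "last (L ! i) \<le> last (L ! j)"
      using lasts_antitone i j by (cases "j = i") (auto simp: sorted_wrt_iff_nth_less)
    then show False
      using i j last_less by simp
  qed
  then show ?thesis
    using sorted_wrt_nth_less[OF sorted_L, of i j] i j by simp
qed

lemma perfectly_clustering_rotate1_less_iff:
  assumes pc: "perfectly_clustering w"
    and x: "x \<in> conjugates w" and y: "y \<in> conjugates w"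
  shows "rotate1 x < rotate1 y \<longleftrightarrow> hd y < hd x \<or> hd x = hd y \<and> x < y"
proof -
  have "w \<noteq> []"
    using pc by (simp add: perfectly_clustering_def primitive_def)
  then obtain c s d t where xy: "x = c # s" "y = d # t" and "length s = length t"
    using length_conjugate[OF x] length_conjugate[OF y]
    by (cases x; cases y) auto
  have x1: "rotate1 x \<in> conjugates w" and y1: "rotate1 y \<in> conjugates w"
    using x y by (simp_all add: rotate1_in_conjugates)
  consider "c < d" | "c = d" | "d < c"
    by fastforce
  then show ?thesis
  proof cases
    case 1
    then have "rotate1 y < rotate1 x"
      using perfectly_clustering_less_if_last_less[OF pc y1 x1] xy by simp
    then show ?thesis
      using 1 xy by auto
  next
    case 2
    then show ?thesis
      using xy \<open>length s = length t\<close> by (simp add: append_less_append_same_length_iff)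
  next
    case 3
    then show ?thesis
      using perfectly_clustering_less_if_last_less[OF pc x1 y1] xy by simp
  qed
qed

definition rotation_rank :: "'a::linorder list \<Rightarrow> nat \<Rightarrow> int" where
  "rotation_rank w p = (\<Sum>q<length w. of_bool (rotate q w < rotate p w))"

definition rotation_rank_within_letter :: "'a::linorder list \<Rightarrow> nat \<Rightarrow> int" where
  "rotation_rank_within_letter w p =
     (\<Sum>q<length w. of_bool (w ! q = w ! p \<and> rotate q w < rotate p w))"

definition letters_below :: "'a::linorder list \<Rightarrow> 'a \<Rightarrow> int" where
  "letters_below w c = (\<Sum>q<length w. of_bool (w ! q < c))"

definition letters_above :: "'a::linorder list \<Rightarrow> 'a \<Rightarrow> int" where
  "letters_above w c = (\<Sum>q<length w. of_bool (c < w ! q))"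

lemma rotation_rank_within_letter_nonneg: "0 \<le> rotation_rank_within_letter w p"
  by (simp add: rotation_rank_within_letter_def sum_nonneg)

lemma rotation_rank_eq_letters_below_plus:
  assumes p: "p < length w"
  shows "rotation_rank w p = letters_below w (w ! p) + rotation_rank_within_letter w p"
proof -
  have "of_bool (rotate q w < rotate p w) =
      of_bool (w ! q < w ! p) + (of_bool (w ! q = w ! p \<and> rotate q w < rotate p w) :: int)"
    if q: "q < length w" for q
  proof -
    have "w \<noteq> []"
      using p by auto
    then obtain s t where "rotate q w = w ! q # s" "rotate p w = w ! p # t"
      using hd_rotate[OF q] hd_rotate[OF p] by (metis list.collapse rotate_is_Nil_conv)
    then show ?thesis
      by auto
  qed
  then show ?thesis
    by (simp add: rotation_rank_def letters_below_def rotation_rank_within_letter_def sum.distrib)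
qed

lemma rotation_rank_Suc_eq_letters_above_plus:
  assumes pc: "perfectly_clustering w" and p: "p < length w"
  shows "rotation_rank w (Suc p) = letters_above w (w ! p) + rotation_rank_within_letter w p"
proof -
  have "rotation_rank w (Suc p) =
      (\<Sum>q<length w. of_bool (rotate (Suc q mod length w) w < rotate (Suc p) w))"
    unfolding rotation_rank_def by (rule sum_lessThan_Suc_mod[symmetric])
  also have "\<dots> = (\<Sum>q<length w. of_bool (rotate (Suc q) w < rotate (Suc p) w))"
    by (simp only: rotate_conv_mod[symmetric])
  also have "\<dots> = (\<Sum>q<length w.
      of_bool (w ! p < w ! q) + of_bool (w ! q = w ! p \<and> rotate q w < rotate p w))"
  proof (intro sum.cong)
    fix q assume "q \<in> {..<length w}"
    then show "of_bool (rotate (Suc q) w < rotate (Suc p) w) =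
        of_bool (w ! p < w ! q) + (of_bool (w ! q = w ! p \<and> rotate q w < rotate p w) :: int)"
      using perfectly_clustering_rotate1_less_iff[OF pc, of "rotate q w" "rotate p w"] p
      by (auto simp: rotate_in_conjugates hd_rotate)
  qed simp
  finally show ?thesis
    by (simp add: letters_above_def rotation_rank_within_letter_def sum.distrib)
qed

lemma perfectly_clustering_rotation_rank_Suc:
  assumes "perfectly_clustering w" and "p < length w"
  shows "rotation_rank w (Suc p) =
           rotation_rank w p + (letters_above w (w ! p) - letters_below w (w ! p))"
  using rotation_rank_Suc_eq_letters_above_plus[OF assms]
    rotation_rank_eq_letters_below_plus[OF assms(2)]
  by simp

lemma letters_below_le_rotation_rank:
  "p < length w \<Longrightarrow> letters_below w (w ! p) \<le> rotation_rank w p"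
  using rotation_rank_eq_letters_below_plus[of p w] rotation_rank_within_letter_nonneg[of w p]
  by linarith

lemma letters_above_le_rotation_rank_Suc:
  "perfectly_clustering w \<Longrightarrow> p < length w \<Longrightarrow>
     letters_above w (w ! p) \<le> rotation_rank w (Suc p)"
  using rotation_rank_Suc_eq_letters_above_plus[of w p] rotation_rank_within_letter_nonneg[of w p]
  by linarith

lemma lyndon_rotation_rank_0:
  assumes "lyndon w"
  shows "rotation_rank w 0 = 0"
proof -
  have "\<not> rotate q w < rotate 0 w" for q
    using assms rotate_in_conjugates[of q w] by (auto simp: lyndon_def)
  then show ?thesis
    unfolding rotation_rank_def by (intro sum.neutral ballI) simp
qed

lemma sum_rotation_rank_le:
  "2 * (\<Sum>p<length w. rotation_rank w p) \<le> int (length w) * (int (length w) - 1)"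
  unfolding rotation_rank_def by (rule count_less_pairs_le[of "\<lambda>q. rotate q w"])

lemma rotate_le_conjugate_if_rotation_rank_le:
  assumes p: "p < length w" and rank: "rotation_rank w p \<le> letters_below w (w ! p)"
    and v: "v \<in> conjugates w" and hd_v: "hd v = w ! p"
  shows "rotate p w \<le> v"
proof (rule ccontr)
  assume "\<not> rotate p w \<le> v"
  then have less: "v < rotate p w"
    by simp
  obtain q where q: "q < length w" "v = rotate q w"
  proof -
    obtain m where "v = rotate m w"
      using v by (auto simp: conjugates_eq_range_rotate)
    then have "v = rotate (m mod length w) w"
      by (metis rotate_conv_mod)
    moreover have "m mod length w < length w"
      using p by (intro mod_less_divisor) linarith
    ultimately show thesis
      using that by blast
  qed
  have "1 \<le> rotation_rank_within_letter w p"
    unfolding rotation_rank_within_letter_def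
    using member_le_sum[of q "{..<length w}"
        "\<lambda>q. of_bool (w ! q = w ! p \<and> rotate q w < rotate p w) :: int"]
      q less hd_v hd_rotate[OF q(1)]
    by simp
  then show False
    using rank rotation_rank_eq_letters_below_plus[OF p] by simp
qed

lemma letters_above_plus_letters_below:
  assumes "c < d" and gap: "\<And>x. x \<in> set w \<Longrightarrow> x \<le> c \<or> d \<le> x"
  shows "letters_above w c + letters_below w d = int (length w)"
proof -
  have "letters_above w c + letters_below w d =
      (\<Sum>q<length w. of_bool (c < w ! q) + of_bool (w ! q < d))"
    by (simp only: letters_above_def letters_below_def sum.distrib)
  also have "\<dots> = (\<Sum>q<length w. 1)"
  proof (intro sum.cong refl)
    fix q assume "q \<in> {..<length w}"
    then show "of_bool (c < w ! q) + of_bool (w ! q < d) = (1 :: int)"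
      using gap[OF nth_mem] \<open>c < d\<close> by fastforce
  qed
  also have "\<dots> = int (length w)"
    by simp
  finally show ?thesis .
qed

definition block_start :: "'a list \<Rightarrow> 'a list list \<Rightarrow> nat \<Rightarrow> nat" where
  "block_start as ps j = length (concat (map (fblock as ps) [0..<j]))"

lemma block_start_0 [simp]: "block_start as ps 0 = 0"
  by (simp add: block_start_def)

lemma block_start_Suc:
  "block_start as ps (Suc j) =
     Suc (block_start as ps j + (if Suc j < length as then length (ps ! j) else 0))"
  by (simp add: block_start_def fblock_def)

lemma mono_block_start: "mono (block_start as ps)"
  unfolding mono_iff_le_Suc by (simp add: block_start_Suc)

lemma special_factorization_append:
  assumes "special_factorization w as ps" and "j \<le> length as"
  shows "w = concat (map (fblock as ps) [0..<j]) @ concat (map (fblock as ps) [j..<length as])"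
proof -
  have "[0..<length as] = [0..<j] @ [j..<length as]"
    using assms(2) upt_add_eq_append[of 0 j "length as - j"] by simp
  then show ?thesis
    using assms(1) by (simp add: special_factorization_def)
qed

lemma nth_block_start:
  assumes "special_factorization w as ps" and "j < length as" and "t < length (fblock as ps j)"
  shows "w ! (block_start as ps j + t) = fblock as ps j ! t"
proof -
  have "w = concat (map (fblock as ps) [0..<j]) @ fblock as ps j @
            concat (map (fblock as ps) [Suc j..<length as])"
    using special_factorization_append[OF assms(1), of j] assms(2) by (simp add: upt_conv_Cons)
  then show ?thesis
    using assms(3) by (simp add: block_start_def nth_append)
qed

lemma length_special_factorization:
  "special_factorization w as ps \<Longrightarrow> length w = block_start as ps (length as)"
  by (simp add: special_factorization_def block_start_def)

lemma rotate_block_start: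
  assumes "special_factorization w as ps" and "j \<le> length as"
  shows "rotate (block_start as ps j) w =
           concat (map (fblock as ps) [j..<length as]) @ concat (map (fblock as ps) [0..<j])"
  using special_factorization_append[OF assms] by (metis block_start_def rotate_append)

lemma sorted_wrt_less_nth_gap:
  fixes xs :: "'a::linorder list"
  assumes "sorted_wrt (<) xs" and "Suc j < length xs" and "x \<in> set xs"
  shows "x \<le> xs ! j \<or> xs ! Suc j \<le> x"
proof -
  obtain m where m: "m < length xs" "x = xs ! m"
    using assms(3) by (metis in_set_conv_nth)
  have "sorted xs"
    using assms(1) by (rule strict_sorted_imp_sorted)
  then show ?thesis
    using m assms(2) by (cases "m \<le> j") (auto intro: sorted_nth_mono)
qed

locale clustering_lyndon_factorization =
  fixes w as :: "'a::linorder list" and ps :: "'a list list"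
  assumes lyndon: "lyndon w" and clustering: "perfectly_clustering w"
    and factorization: "palindromic_special_factorization w as ps"
begin

abbreviation start :: "nat \<Rightarrow> nat" where
  "start j \<equiv> block_start as ps j"

lemma special: "special_factorization w as ps"
  using factorization by (simp add: palindromic_special_factorization_def)

lemma nth_start: "j < length as \<Longrightarrow> w ! start j = as ! j"
  using nth_block_start[OF special, of j 0] by (simp add: fblock_def)

lemma nth_after_start:
  "Suc j < length as \<Longrightarrow> t < length (ps ! j) \<Longrightarrow>
     w ! (Suc (start j) + t) = ps ! j ! t"
  using nth_block_start[OF special, of j "Suc t"] by (simp add: fblock_def)

lemma start_Suc: "Suc j < length as \<Longrightarrow> start (Suc j) = Suc (start j) + length (ps ! j)"
  by (simp add: block_start_Suc)

lemma word_nonempty: "w \<noteq> []"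
  using clustering by (simp add: perfectly_clustering_def primitive_def)

lemma Suc_start_last: "Suc (start (length as - 1)) = length w"
proof -
  have "as \<noteq> []"
    using word_nonempty special by (auto simp: special_factorization_def)
  then show ?thesis
    using length_special_factorization[OF special] block_start_Suc[of as ps "length as - 1"]
    by simp
qed

lemma start_less_length:
  assumes "j < length as"
  shows "start j < length w"
proof -
  have "start j \<le> start (length as - 1)"
    using assms by (intro monoD[OF mono_block_start]) simp
  then show ?thesis
    using Suc_start_last by simp
qed

lemma letters_above_plus_letters_below_consecutive:
  assumes "Suc j < length as"
  shows "letters_above w (as ! j) + letters_below w (as ! Suc j) = int (length w)"
proof -
  have sorted: "sorted_wrt (<) as" and "set as = set w"
    using special by (simp_all add: special_factorization_def)
  then show ?thesis
    using assms sorted_wrt_less_nth_gap[OF sorted assms]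
    by (intro letters_above_plus_letters_below) (auto simp: sorted_wrt_nth_less)
qed

lemma block_rank_sum:
  assumes j: "Suc j < length as"
  shows "2 * (\<Sum>p\<in>{Suc (start j)..start (Suc j)}. rotation_rank w p) =
    (int (start (Suc j)) - int (start j)) *
      (rotation_rank w (Suc (start j)) + rotation_rank w (start (Suc j)))"
proof -
  define a where "a = Suc (start j)"
  define \<pi> where "\<pi> = ps ! j"
  define \<delta> where "\<delta> c = letters_above w c - letters_below w c" for c
  have end_eq: "start (Suc j) = a + length \<pi>"
    using start_Suc[OF j] by (simp add: a_def \<pi>_def)
  have "rev \<pi> = \<pi>"
    using factorization j
    by (simp add: palindromic_special_factorization_def special_factorization_def \<pi>_def)
  moreover have "rotation_rank w (a + Suc t) = rotation_rank w (a + t) + \<delta> (\<pi> ! t)"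
    if "t < length \<pi>" for t
  proof -
    have "a + t < length w"
      using that end_eq start_less_length[OF j] by simp
    then show ?thesis
      using perfectly_clustering_rotation_rank_Suc[OF clustering, of "a + t"]
        nth_after_start[OF j that[unfolded \<pi>_def]]
      by (simp add: a_def \<pi>_def \<delta>_def)
  qed
  ultimately have "2 * (\<Sum>t\<le>length \<pi>. rotation_rank w (a + t)) =
      of_nat (Suc (length \<pi>)) * (rotation_rank w (a + 0) + rotation_rank w (a + length \<pi>))"
    by (rule sum_palindromic_increments)
  moreover have "(\<Sum>p\<in>{a..a + length \<pi>}. rotation_rank w p) =
      (\<Sum>t\<le>length \<pi>. rotation_rank w (a + t))"
    using sum.shift_bounds_cl_nat_ivl[of "rotation_rank w" 0 a "length \<pi>"]
    by (simp add: atLeast0AtMost add.commute)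
  ultimately show ?thesis
    using end_eq by (simp add: a_def)
qed

lemma block_rank_lower:
  assumes j: "Suc j < length as"
  shows "int (length w) \<le> rotation_rank w (Suc (start j)) + rotation_rank w (start (Suc j))"
proof -
  have "letters_above w (as ! j) \<le> rotation_rank w (Suc (start j))"
    using letters_above_le_rotation_rank_Suc[OF clustering, of "start j"]
      start_less_length[of j] nth_start[of j] j by simp
  moreover have "letters_below w (as ! Suc j) \<le> rotation_rank w (start (Suc j))"
    using letters_below_le_rotation_rank[of "start (Suc j)" w]
      start_less_length[OF j] nth_start[OF j] by simp
  ultimately show ?thesis
    using letters_above_plus_letters_below_consecutive[OF j] by simp
qed

lemma sum_block_lengths:
  "(\<Sum>i<length as - 1. int (start (Suc i)) - int (start i)) = int (length w) - 1"
  using sum_lessThan_telescope[of "\<lambda>i. int (start i)" "length as - 1"] Suc_start_last by simp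

lemma sum_rotation_rank_by_blocks:
  "2 * (\<Sum>p<length w. rotation_rank w p) =
     (\<Sum>i<length as - 1. (int (start (Suc i)) - int (start i)) *
        (rotation_rank w (Suc (start i)) + rotation_rank w (start (Suc i))))"
proof -
  define m where "m = length as - 1"
  have "(\<Sum>p<length w. rotation_rank w p) =
      rotation_rank w 0 + (\<Sum>p\<in>{Suc 0..<length w}. rotation_rank w p)"
    using word_nonempty
    by (subst sum.atLeast_Suc_lessThan[symmetric]) (simp_all add: atLeast0LessThan)
  also have "\<dots> = (\<Sum>p\<in>{Suc (start 0)..<Suc (start m)}. rotation_rank w p)"
    by (simp only: lyndon_rotation_rank_0[OF lyndon] m_def Suc_start_last block_start_0 add_0)
  also have "\<dots> = (\<Sum>i<m. \<Sum>p\<in>{Suc (start i)..<Suc (start (Suc i))}. rotation_rank w p)"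
    by (rule sum_atLeastLessThan_mono_partition) (simp add: mono_def monoD[OF mono_block_start])
  finally have "2 * (\<Sum>p<length w. rotation_rank w p) =
      (\<Sum>i<m. 2 * (\<Sum>p\<in>{Suc (start i)..start (Suc i)}. rotation_rank w p))"
    by (simp add: sum_distrib_left atLeastLessThanSuc_atLeastAtMost)
  also have "\<dots> = (\<Sum>i<m. (int (start (Suc i)) - int (start i)) *
        (rotation_rank w (Suc (start i)) + rotation_rank w (start (Suc i))))"
    by (intro sum.cong refl) (auto simp: m_def intro!: block_rank_sum)
  finally show ?thesis
    by (simp only: m_def)
qed

lemma block_rank_upper:
  assumes j: "Suc j < length as"
  shows "rotation_rank w (Suc (start j)) + rotation_rank w (start (Suc j)) \<le> int (length w)"
proof -
  define n where "n = int (length w)"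
  define m where "m = length as - 1"
  define L where "L i = int (start (Suc i)) - int (start i)" for i
  define K where "K i = rotation_rank w (Suc (start i)) + rotation_rank w (start (Suc i))" for i
  have "(\<Sum>i<m. L i * (K i - n)) = (\<Sum>i<m. L i * K i) - (\<Sum>i<m. L i) * n"
    by (simp add: right_diff_distrib sum_subtractf sum_distrib_right)
  also have "\<dots> = 2 * (\<Sum>p<length w. rotation_rank w p) - n * (n - 1)"
    using sum_rotation_rank_by_blocks sum_block_lengths
    by (simp add: L_def K_def n_def m_def mult.commute)
  also have "\<dots> \<le> 0"
    using sum_rotation_rank_le[of w] by (simp add: n_def)
  finally have "(\<Sum>i<m. L i * (K i - n)) \<le> 0" .
  moreover have "L j * (K j - n) \<le> (\<Sum>i<m. L i * (K i - n))"
  proof (rule member_le_sum)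
    show "j \<in> {..<m}"
      using j by (simp add: m_def)
    fix i assume "i \<in> {..<m} - {j}"
    then have "Suc i < length as"
      by (auto simp: m_def)
    then show "0 \<le> L i * (K i - n)"
      using block_rank_lower monoD[OF mono_block_start, of i "Suc i" as ps]
      by (intro mult_nonneg_nonneg) (simp_all add: L_def K_def n_def)
  qed simp
  ultimately have "L j * (K j - n) \<le> 0"
    by simp
  moreover have "0 < L j"
    using start_Suc[OF j] by (simp add: L_def)
  ultimately show ?thesis
    by (simp add: K_def n_def mult_le_0_iff)
qed

lemma rotation_rank_block_start_le:
  assumes i: "i < length as"
  shows "rotation_rank w (start i) \<le> letters_below w (as ! i)"
proof (cases i)
  case 0
  then show ?thesis
    using lyndon_rotation_rank_0[OF lyndon] by (simp add: letters_below_def sum_nonneg)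
next
  case (Suc j)
  have "letters_above w (as ! j) \<le> rotation_rank w (Suc (start j))"
    using letters_above_le_rotation_rank_Suc[OF clustering, of "start j"]
      start_less_length[of j] nth_start[of j] i Suc by simp
  then show ?thesis
    using block_rank_upper[of j] letters_above_plus_letters_below_consecutive[of j] i Suc by simp
qed

end

theorem lemma4p6:
  fixes w as :: "'a::linorder list" and ps :: "'a list list"
  assumes "lyndon w" and "perfectly_clustering w"
    and "palindromic_special_factorization w as ps"
    and "i < length as"
  shows "(let u = concat (map (fblock as ps) [i..<length as]) @
                  concat (map (fblock as ps) [0..<i])
          in u \<in> conjugates w \<and> hd u = as ! i \<and>
             (\<forall>v \<in> conjugates w. v \<noteq> [] \<and> hd v = as ! i \<longrightarrow> u \<le> v))"
proof -
  interpret clustering_lyndon_factorization w as ps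
    using assms(1-3) by unfold_locales
  define u where
    "u = concat (map (fblock as ps) [i..<length as]) @ concat (map (fblock as ps) [0..<i])"
  have u: "u = rotate (start i) w"
    using rotate_block_start[OF special] assms(4) by (simp add: u_def)
  have start: "start i < length w" and letter: "w ! start i = as ! i"
    using start_less_length nth_start assms(4) by simp_all
  have "u \<le> v" if "v \<in> conjugates w" and "hd v = as ! i" for v
    using rotate_le_conjugate_if_rotation_rank_le[OF start _ that(1)]
      rotation_rank_block_start_le[OF assms(4)] letter that(2) u by simp
  moreover have "u \<in> conjugates w" and "hd u = as ! i"
    using u start letter by (simp_all add: rotate_in_conjugates hd_rotate)
  ultimately show ?thesis
    unfolding Let_def u_def[symmetric] by blast
qed

end
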